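(* Under the hypotheses below, if $|r_i|=|r_j|$ then $|\sigma_a(r_i)|=|\sigma_a(r_j)|$ for every nonzero $a\in\mathcal M$.
   Context: $\mathcal M$ denotes the $\mathbb Q$-vector space $\mathbb Q^{<\omega}$ of all sequences of rationals with only finitely many nonzero terms, with zero vector $\vec 0$; a relation is definable if it is first-order definable without parameters in $\langle\mathcal M;+\rangle$. Let $n\ge1$, let $r_1,\dots,r_n$ be pairwise distinct rationals with $r_i\notin\{0,1\}$, and let $R$ be a definable binary relation such that for all $x\ne\vec 0$ and all $y$: $R(x,y)\iff y\in\{r_1x,\dots,r_nx\}$. Let $\varphi$ be a permutation of $\mathcal M$ preserving $R$ (i.e. $R(a,b)\iff R(\varphi(a),\varphi(b))$). Then $\varphi(\vec 0)=\vec 0$ and for every nonzero $a$ there is a unique permutation $\sigma_a$ of $\{r_1,\dots,r_n\}$ with $\varphi(r_ia)=\sigma_a(r_i)\varphi(a)$ for all $i$; this is the $\sigma_a$ in the claim. *)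

theory Defs
  imports Complex_Main "HOL-Library.Poly_Mapping"
begin

type_synonym M = "nat \<Rightarrow>\<^sub>0 rat"

definition smul :: "rat \<Rightarrow> M \<Rightarrow> M" where
  "smul r x = Poly_Mapping.map (\<lambda>c. r * c) x"

datatype fterm = TVar nat | TPlus fterm fterm

datatype fform = FEq fterm fterm | FNot fform | FAnd fform fform | FEx nat fform

fun teval :: "(nat \<Rightarrow> M) \<Rightarrow> fterm \<Rightarrow> M" where
  "teval e (TVar v) = e v"
| "teval e (TPlus s t) = teval e s + teval e t"

fun tvars :: "fterm \<Rightarrow> nat set" where
  "tvars (TVar v) = {v}"
| "tvars (TPlus s t) = tvars s \<union> tvars t"

fun fsat :: "(nat \<Rightarrow> M) \<Rightarrow> fform \<Rightarrow> bool" where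
  "fsat e (FEq s t) = (teval e s = teval e t)"
| "fsat e (FNot p) = (\<not> fsat e p)"
| "fsat e (FAnd p q) = (fsat e p \<and> fsat e q)"
| "fsat e (FEx v p) = (\<exists>m. fsat (e(v := m)) p)"

fun ffree :: "fform \<Rightarrow> nat set" where
  "ffree (FEq s t) = tvars s \<union> tvars t"
| "ffree (FNot p) = ffree p"
| "ffree (FAnd p q) = ffree p \<union> ffree q"
| "ffree (FEx v p) = ffree p - {v}"

definition definable2 :: "(M \<Rightarrow> M \<Rightarrow> bool) \<Rightarrow> bool" where
  "definable2 R \<longleftrightarrow> (\<exists>p. ffree p \<subseteq> {0, 1} \<and>
     (\<forall>a b. R a b \<longleftrightarrow> fsat (\<lambda>v. if v = 0 then a else if v = 1 then b else 0) p))"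

end

theory Submission
  imports Defs
begin

text \<open>Let \<open>S\<close> be the finite set of scalars with \<open>R x y \<longleftrightarrow> y \<in> S x\<close> for \<open>x \<noteq> 0\<close>. For \<open>q \<in> S\<close>
  write \<open>\<phi> (q x) = \<sigma>\<^sub>x(q) \<phi> x\<close>, where \<open>\<sigma>\<^sub>x\<close> permutes \<open>S\<close>, and \<open>\<phi> (-x) = \<kappa>(x) \<phi> x\<close>.
  Computing \<open>\<phi> (q (-x))\<close> in two ways gives \<open>\<kappa>(q x) \<sigma>\<^sub>x(q) = \<sigma>\<^sub>-\<^sub>x(q) \<kappa>(x)\<close>, so for
  \<open>L = ln |\<kappa>|\<close> the increments \<open>L(q x) - L(x)\<close> are bounded and, since \<open>\<sigma>\<^sub>x\<close> and \<open>\<sigma>\<^sub>-\<^sub>x\<close>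
  permute \<open>S\<close>, \<open>\<Sum>\<^sub>q\<^sub>\<in>\<^sub>S L(q x) = |S| L(x)\<close>. Pairs \<open>\<plusminus>q\<close> in \<open>S\<close> contribute nothing because
  \<open>L(-y) = -L(y)\<close>; as \<open>S\<close> contains such a pair, some \<open>q x\<close> satisfies
  \<open>|S| |L(x)| \<le> (|S| - 2) |L(q x)|\<close>. Together with the bounded increments this first bounds \<open>L\<close>,
  and iterating then forces \<open>L = 0\<close>. Hence \<open>|\<kappa>| = 1\<close>, and \<open>r\<^sub>j = -r\<^sub>i\<close> gives
  \<open>\<sigma>\<^sub>a(r\<^sub>j) = \<kappa>(r\<^sub>i a) \<sigma>\<^sub>a(r\<^sub>i)\<close>.\<close>

lemma lookup_smul: "Poly_Mapping.lookup (smul q x) k = q * Poly_Mapping.lookup x k"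
  unfolding smul_def by (simp add: Poly_Mapping.map.rep_eq when_def)

lemma smul_smul: "smul p (smul q x) = smul (p * q) x"
  by (rule poly_mapping_eqI) (simp add: lookup_smul)

lemma smul_one [simp]: "smul 1 x = x"
  by (rule poly_mapping_eqI) (simp add: lookup_smul)

lemma smul_minus_left: "smul (- q) x = - smul q x"
  by (rule poly_mapping_eqI) (simp add: lookup_smul)

lemma smul_minus_right: "smul q (- x) = - smul q x"
  by (rule poly_mapping_eqI) (simp add: lookup_smul)

lemma smul_diff_left: "smul (p - q) x = smul p x - smul q x"
  by (rule poly_mapping_eqI) (simp add: lookup_smul lookup_minus algebra_simps)

lemma smul_eq_0_iff [simp]: "smul q x = 0 \<longleftrightarrow> q = 0 \<or> x = 0"
  by (auto simp: poly_mapping_eq_iff fun_eq_iff lookup_smul)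

lemma smul_right_cancel: "x \<noteq> 0 \<Longrightarrow> smul p x = smul q x \<longleftrightarrow> p = q"
  by (metis eq_iff_diff_eq_0 smul_diff_left smul_eq_0_iff)

definition log_abs :: "rat \<Rightarrow> real" where
  "log_abs q = ln (real_of_rat \<bar>q\<bar>)"

lemma log_abs_mult: "p \<noteq> 0 \<Longrightarrow> q \<noteq> 0 \<Longrightarrow> log_abs (p * q) = log_abs p + log_abs q"
  by (simp add: log_abs_def abs_mult of_rat_mult ln_mult)

lemma log_abs_eq_0_iff: "q \<noteq> 0 \<Longrightarrow> log_abs q = 0 \<longleftrightarrow> \<bar>q\<bar> = 1"
  by (simp add: log_abs_def)

lemma ex_abs_sum_le_card_mult:
  fixes f :: "'a \<Rightarrow> real"
  assumes "finite A" "A \<noteq> {}"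
  shows "\<exists>a\<in>A. \<bar>sum f A\<bar> \<le> real (card A) * \<bar>f a\<bar>"
proof (rule ccontr)
  assume "\<not> ?thesis"
  then have less: "real (card A) * \<bar>f a\<bar> < \<bar>sum f A\<bar>" if "a \<in> A" for a
    using that by force
  have "real (card A) * (\<Sum>a\<in>A. \<bar>f a\<bar>) = (\<Sum>a\<in>A. real (card A) * \<bar>f a\<bar>)"
    by (simp add: sum_distrib_left)
  also have "\<dots> < (\<Sum>a\<in>A. \<bar>sum f A\<bar>)"
    using assms less by (intro sum_strict_mono) auto
  also have "\<dots> = real (card A) * \<bar>sum f A\<bar>" by simp
  also have "\<dots> \<le> real (card A) * (\<Sum>a\<in>A. \<bar>f a\<bar>)"
    by (intro mult_left_mono sum_abs) auto
  finally show False by simp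
qed

locale scaling_preserver =
  fixes S :: "rat set" and R :: "M \<Rightarrow> M \<Rightarrow> bool" and \<phi> :: "M \<Rightarrow> M" and s :: rat
  assumes finite_S: "finite S" and zero_notin_S: "0 \<notin> S"
    and R_iff: "\<And>x y. x \<noteq> 0 \<Longrightarrow> R x y \<longleftrightarrow> (\<exists>q\<in>S. y = smul q x)"
    and bij_\<phi>: "bij \<phi>" and \<phi>_preserves: "\<And>a b. R a b \<longleftrightarrow> R (\<phi> a) (\<phi> b)"
    and s_in_S: "s \<in> S" and minus_s_in_S: "- s \<in> S"
begin

lemma nonzero_if_in_S: "q \<in> S \<Longrightarrow> q \<noteq> 0"
  using zero_notin_S by blast

lemma R_zero_right_imp: "R x 0 \<Longrightarrow> x = 0"
  using R_iff nonzero_if_in_S by (metis smul_eq_0_iff)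

text \<open>If \<open>\<phi> 0 \<noteq> 0\<close>, then \<open>\<phi> 0 = s w\<^sub>1 = (-s) w\<^sub>2\<close> with \<open>w\<^sub>1 \<noteq> w\<^sub>2\<close>, so \<open>0\<close> would be
  \<open>R\<close>-related to the two distinct preimages of \<open>w\<^sub>1, w\<^sub>2\<close>.\<close>
lemma \<phi>_zero: "\<phi> 0 = 0"
proof (rule ccontr)
  assume nz: "\<phi> 0 \<noteq> 0"
  have s: "s \<noteq> 0" using nonzero_if_in_S s_in_S .
  define w1 where "w1 = smul (1 / s) (\<phi> 0)"
  define w2 where "w2 = smul (- 1 / s) (\<phi> 0)"
  have w: "w1 \<noteq> 0" "w2 \<noteq> 0" "w1 \<noteq> w2"
    using nz s by (auto simp: w1_def w2_def smul_right_cancel)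
  have "\<phi> 0 = smul s w1" "\<phi> 0 = smul (- s) w2"
    using s by (simp_all add: w1_def w2_def smul_smul)
  then have "R w1 (\<phi> 0)" "R w2 (\<phi> 0)"
    using R_iff[OF w(1)] R_iff[OF w(2)] s_in_S minus_s_in_S by blast+
  moreover have "\<phi> (inv \<phi> w) = w" for w
    using bij_\<phi> by (simp add: bij_is_surj surj_f_inv_f)
  ultimately have "R (inv \<phi> w1) 0" "R (inv \<phi> w2) 0"
    using \<phi>_preserves by metis+
  then show False
    using w(3) \<open>\<And>w. \<phi> (inv \<phi> w) = w\<close> R_zero_right_imp by metis
qed

lemma \<phi>_nonzero: "x \<noteq> 0 \<Longrightarrow> \<phi> x \<noteq> 0"
  using \<phi>_zero bij_\<phi> by (metis bij_is_inj inj_eq)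

lemma ex_factor_in_S: "x \<noteq> 0 \<Longrightarrow> q \<in> S \<Longrightarrow> \<exists>q'\<in>S. \<phi> (smul q x) = smul q' (\<phi> x)"
  using R_iff \<phi>_preserves \<phi>_nonzero by metis

definition factor :: "M \<Rightarrow> rat \<Rightarrow> rat" where
  "factor x q = (SOME q'. q' \<in> S \<and> \<phi> (smul q x) = smul q' (\<phi> x))"

lemma
  assumes "x \<noteq> 0" "q \<in> S"
  shows factor_in_S: "factor x q \<in> S"
    and \<phi>_smul: "\<phi> (smul q x) = smul (factor x q) (\<phi> x)"
  using someI_ex[OF ex_factor_in_S[OF assms, unfolded Bex_def]] unfolding factor_def by blast+

lemma factor_nonzero: "x \<noteq> 0 \<Longrightarrow> q \<in> S \<Longrightarrow> factor x q \<noteq> 0"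
  using factor_in_S nonzero_if_in_S by blast

lemma bij_betw_factor: assumes "x \<noteq> 0" shows "bij_betw (factor x) S S"
proof -
  have "inj_on (factor x) S"
  proof
    fix p q assume "p \<in> S" "q \<in> S" "factor x p = factor x q"
    then have "\<phi> (smul p x) = \<phi> (smul q x)" using \<phi>_smul[OF assms] by metis
    then show "p = q"
      using bij_\<phi> smul_right_cancel[OF assms] by (metis bij_is_inj injD)
  qed
  then show ?thesis
    using endo_inj_surj[OF finite_S] factor_in_S[OF assms] by (auto simp: bij_betw_def)
qed

lemma sum_factor: "x \<noteq> 0 \<Longrightarrow> (\<Sum>q\<in>S. g (factor x q)) = (\<Sum>q\<in>S. g q)"
  using sum.reindex_bij_betw[OF bij_betw_factor] .

text \<open>Because \<open>s x = (-s) (-x)\<close>, this is the scalar with \<open>\<phi> (-x) = neg_factor x \<phi> x\<close>.\<close>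
definition neg_factor :: "M \<Rightarrow> rat" where
  "neg_factor x = factor x s / factor (- x) (- s)"

lemma neg_factor_nonzero: "x \<noteq> 0 \<Longrightarrow> neg_factor x \<noteq> 0"
  using factor_nonzero s_in_S minus_s_in_S by (simp add: neg_factor_def)

lemma \<phi>_uminus: assumes "x \<noteq> 0" shows "\<phi> (- x) = smul (neg_factor x) (\<phi> x)"
proof -
  have x': "- x \<noteq> 0" using assms by simp
  have "smul (factor (- x) (- s)) (\<phi> (- x)) = smul (factor x s) (\<phi> x)"
    using \<phi>_smul[OF x' minus_s_in_S] \<phi>_smul[OF assms s_in_S]
    by (metis minus_minus smul_minus_left smul_minus_right)
  then have "smul (1 / factor (- x) (- s)) (smul (factor (- x) (- s)) (\<phi> (- x)))
      = smul (neg_factor x) (\<phi> x)"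
    by (simp add: smul_smul neg_factor_def)
  then show ?thesis
    using factor_nonzero[OF x' minus_s_in_S] by (simp add: smul_smul)
qed

lemma neg_factor_smul:
  assumes x: "x \<noteq> 0" and q: "q \<in> S"
  shows "neg_factor (smul q x) * factor x q = factor (- x) q * neg_factor x"
proof -
  have qx: "smul q x \<noteq> 0" using x q nonzero_if_in_S by simp
  have "smul (neg_factor (smul q x) * factor x q) (\<phi> x) = \<phi> (- smul q x)"
    using \<phi>_uminus[OF qx] \<phi>_smul[OF x q] by (simp add: smul_smul)
  also have "\<dots> = \<phi> (smul q (- x))" by (simp add: smul_minus_right)
  also have "\<dots> = smul (factor (- x) q * neg_factor x) (\<phi> x)"
    using \<phi>_smul[of "- x" q] \<phi>_uminus[OF x] x q by (simp add: smul_smul)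
  finally show ?thesis using smul_right_cancel[OF \<phi>_nonzero[OF x]] by blast
qed

lemma neg_factor_uminus: assumes "x \<noteq> 0" shows "neg_factor (- x) * neg_factor x = 1"
proof -
  have "smul 1 (\<phi> x) = smul (neg_factor (- x) * neg_factor x) (\<phi> x)"
    using \<phi>_uminus[of "- x"] \<phi>_uminus[OF assms] assms by (simp add: smul_smul)
  then show ?thesis using smul_right_cancel[OF \<phi>_nonzero[OF assms]] by metis
qed

definition log_neg_factor :: "M \<Rightarrow> real" where
  "log_neg_factor x = log_abs (neg_factor x)"

definition sym_part :: "rat set" where
  "sym_part = {q \<in> S. - q \<in> S}"

lemma sym_part_subset: "sym_part \<subseteq> S"
  by (auto simp: sym_part_def)

lemma log_neg_factor_smul:
  assumes x: "x \<noteq> 0" and q: "q \<in> S"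
  shows "log_neg_factor (smul q x) + log_abs (factor x q)
    = log_abs (factor (- x) q) + log_neg_factor x"
proof -
  have "smul q x \<noteq> 0" "- x \<noteq> 0" using x q nonzero_if_in_S by simp_all
  then show ?thesis
    using arg_cong[OF neg_factor_smul[OF x q], of log_abs] x q
    by (simp add: log_neg_factor_def log_abs_mult neg_factor_nonzero factor_nonzero)
qed

lemma log_neg_factor_uminus:
  assumes "x \<noteq> 0" shows "log_neg_factor (- x) = - log_neg_factor x"
proof -
  have "log_abs (neg_factor (- x) * neg_factor x) = 0"
    using neg_factor_uminus[OF assms] by (simp add: log_abs_def)
  then show ?thesis
    using assms by (simp add: log_neg_factor_def log_abs_mult neg_factor_nonzero)
qed

lemma sum_log_neg_factor:
  assumes x: "x \<noteq> 0"
  shows "(\<Sum>q\<in>S. log_neg_factor (smul q x)) = real (card S) * log_neg_factor x"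
proof -
  have "(\<Sum>q\<in>S. log_neg_factor (smul q x)) + (\<Sum>q\<in>S. log_abs (factor x q))
      = (\<Sum>q\<in>S. log_abs (factor (- x) q)) + (\<Sum>q\<in>S. log_neg_factor x)"
    unfolding sum.distrib[symmetric] using log_neg_factor_smul[OF x] by (rule sum.cong[OF refl])
  then show ?thesis
    using x by (simp add: sum_factor)
qed

lemma sum_sym_part_log_neg_factor:
  assumes x: "x \<noteq> 0"
  shows "(\<Sum>q\<in>sym_part. log_neg_factor (smul q x)) = 0"
proof -
  have "bij_betw uminus sym_part sym_part"
    by (rule bij_betw_byWitness[of _ uminus]) (auto simp: sym_part_def)
  then have "(\<Sum>q\<in>sym_part. log_neg_factor (smul q x))
      = (\<Sum>q\<in>sym_part. log_neg_factor (smul (- q) x))"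
    using sum.reindex_bij_betw[of uminus sym_part sym_part "\<lambda>q. log_neg_factor (smul q x)"]
    by simp
  also have "\<dots> = (\<Sum>q\<in>sym_part. - log_neg_factor (smul q x))"
  proof (rule sum.cong[OF refl])
    fix q assume "q \<in> sym_part"
    then have "smul q x \<noteq> 0" using x nonzero_if_in_S sym_part_subset by auto
    then show "log_neg_factor (smul (- q) x) = - log_neg_factor (smul q x)"
      by (simp add: smul_minus_left log_neg_factor_uminus)
  qed
  finally show ?thesis by (simp add: sum_negf)
qed

lemma sum_asym_part_log_neg_factor:
  "x \<noteq> 0 \<Longrightarrow> (\<Sum>q\<in>S - sym_part. log_neg_factor (smul q x)) = real (card S) * log_neg_factor x"
  using sum.subset_diff[OF sym_part_subset finite_S, of "\<lambda>q. log_neg_factor (smul q x)"]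
    sum_log_neg_factor sum_sym_part_log_neg_factor
  by simp

lemma card_asym_part: "card (S - sym_part) + 2 \<le> card S"
proof -
  have fin: "finite sym_part" using finite_subset[OF sym_part_subset finite_S] .
  have "{s, - s} \<subseteq> sym_part" using s_in_S minus_s_in_S by (auto simp: sym_part_def)
  moreover have "card {s, - s} = 2" using nonzero_if_in_S[OF s_in_S] by simp
  ultimately have "2 \<le> card sym_part" using card_mono[OF fin] by metis
  moreover have "card (S - sym_part) = card S - card sym_part"
    using card_Diff_subset[OF fin sym_part_subset] .
  moreover have "card sym_part \<le> card S" using card_mono[OF finite_S sym_part_subset] .
  ultimately show ?thesis by linarith
qed

lemma abs_log_neg_factor_smul_le:
  assumes x: "x \<noteq> 0" and q: "q \<in> S"
  shows "\<bar>log_neg_factor (smul q x)\<bar> \<le> \<bar>log_neg_factor x\<bar> + 2 * (\<Sum>p\<in>S. \<bar>log_abs p\<bar>)"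
proof -
  have "- x \<noteq> 0" using x by simp
  then have "\<bar>log_abs (factor x q)\<bar> \<le> (\<Sum>p\<in>S. \<bar>log_abs p\<bar>)"
    "\<bar>log_abs (factor (- x) q)\<bar> \<le> (\<Sum>p\<in>S. \<bar>log_abs p\<bar>)"
    using factor_in_S[OF x q] factor_in_S[of "- x" q] q finite_S
    by (auto intro: member_le_sum)
  then show ?thesis using log_neg_factor_smul[OF x q] by linarith
qed

lemma log_neg_factor_grows:
  assumes x: "x \<noteq> 0"
  shows "\<exists>q\<in>S. real (card S) * \<bar>log_neg_factor x\<bar>
    \<le> real (card (S - sym_part)) * \<bar>log_neg_factor (smul q x)\<bar>"
proof (cases "S - sym_part = {}")
  case True
  then have "real (card S) * log_neg_factor x = 0"
    using sum_asym_part_log_neg_factor[OF x] by (simp only: sum.empty)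
  then have "log_neg_factor x = 0" using card_asym_part by simp
  then show ?thesis using s_in_S by (auto simp: abs_mult)
next
  case False
  then obtain q where "q \<in> S - sym_part"
    "\<bar>\<Sum>p\<in>S - sym_part. log_neg_factor (smul p x)\<bar>
      \<le> real (card (S - sym_part)) * \<bar>log_neg_factor (smul q x)\<bar>"
    using ex_abs_sum_le_card_mult[of "S - sym_part"] finite_S by blast
  then show ?thesis
    using sum_asym_part_log_neg_factor[OF x] by (auto simp: abs_mult)
qed

lemma abs_log_neg_factor_le:
  assumes x: "x \<noteq> 0"
  shows "\<bar>log_neg_factor x\<bar> \<le> real (card S) * (\<Sum>p\<in>S. \<bar>log_abs p\<bar>)"
proof -
  define N m B where "N = real (card S)" and "m = real (card (S - sym_part))"
    and "B = (\<Sum>p\<in>S. \<bar>log_abs p\<bar>)"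
  obtain q where q: "q \<in> S"
    and grow: "N * \<bar>log_neg_factor x\<bar> \<le> m * \<bar>log_neg_factor (smul q x)\<bar>"
    using log_neg_factor_grows[OF x] unfolding N_def m_def by blast
  note grow
  also have "\<dots> \<le> m * (\<bar>log_neg_factor x\<bar> + 2 * B)"
    using abs_log_neg_factor_smul_le[OF x q] by (intro mult_left_mono) (auto simp: m_def B_def)
  finally have "(N - m) * \<bar>log_neg_factor x\<bar> \<le> 2 * m * B"
    by (simp add: algebra_simps)
  moreover have "m + 2 \<le> N" "0 \<le> m" "0 \<le> B"
    using card_asym_part by (auto simp: N_def m_def B_def)
  moreover have "2 * \<bar>log_neg_factor x\<bar> \<le> (N - m) * \<bar>log_neg_factor x\<bar>"
    using \<open>m + 2 \<le> N\<close> by (intro mult_right_mono) auto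
  moreover have "2 * m * B \<le> 2 * N * B"
    using \<open>m + 2 \<le> N\<close> \<open>0 \<le> B\<close> by (intro mult_right_mono) auto
  ultimately have "2 * \<bar>log_neg_factor x\<bar> \<le> 2 * N * B" by linarith
  then show ?thesis by (simp add: N_def B_def)
qed

lemma abs_log_neg_factor_le_power:
  "x \<noteq> 0 \<Longrightarrow> \<bar>log_neg_factor x\<bar>
    \<le> (real (card (S - sym_part)) / real (card S)) ^ k * (real (card S) * (\<Sum>p\<in>S. \<bar>log_abs p\<bar>))"
proof (induction k arbitrary: x)
  case 0
  then show ?case using abs_log_neg_factor_le by simp
next
  case (Suc k)
  define N m C where "N = real (card S)" and "m = real (card (S - sym_part))"
    and "C = real (card S) * (\<Sum>p\<in>S. \<bar>log_abs p\<bar>)"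
  have N: "N > 0" using card_asym_part by (simp add: N_def)
  obtain q where q: "q \<in> S"
    and grow: "N * \<bar>log_neg_factor x\<bar> \<le> m * \<bar>log_neg_factor (smul q x)\<bar>"
    using log_neg_factor_grows[OF Suc.prems] unfolding N_def m_def by blast
  note grow
  also have "\<dots> \<le> m * ((m / N) ^ k * C)"
    using Suc.IH[of "smul q x"] Suc.prems q nonzero_if_in_S
    by (intro mult_left_mono) (auto simp: N_def m_def C_def)
  finally have "\<bar>log_neg_factor x\<bar> \<le> m * ((m / N) ^ k * C) / N"
    using N by (simp add: pos_le_divide_eq mult.commute)
  also have "\<dots> = (m / N) ^ Suc k * C" by simp
  finally show ?case by (simp add: N_def m_def C_def)
qed

lemma abs_neg_factor: assumes x: "x \<noteq> 0" shows "\<bar>neg_factor x\<bar> = 1"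
proof -
  define \<rho> C where "\<rho> = real (card (S - sym_part)) / real (card S)"
    and "C = real (card S) * (\<Sum>p\<in>S. \<bar>log_abs p\<bar>)"
  have "0 \<le> \<rho>" "\<rho> < 1" using card_asym_part by (auto simp: \<rho>_def divide_less_eq)
  then have "(\<lambda>k. \<rho> ^ k * C) \<longlonglongrightarrow> 0 * C"
    by (intro tendsto_mult LIMSEQ_power_zero tendsto_const) simp
  then have "\<bar>log_neg_factor x\<bar> \<le> 0"
    using abs_log_neg_factor_le_power[OF x] by (intro LIMSEQ_le_const) (auto simp: \<rho>_def C_def)
  then show ?thesis
    using log_abs_eq_0_iff neg_factor_nonzero[OF x] by (simp add: log_neg_factor_def)
qed

end

theorem mainTheorem5:
  fixes n :: nat and r :: "nat \<Rightarrow> rat" and R :: "M \<Rightarrow> M \<Rightarrow> bool"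
    and \<phi> :: "M \<Rightarrow> M"
  assumes "n \<ge> 1"
    and "inj_on r {..<n}"
    and "\<forall>i<n. r i \<noteq> 0 \<and> r i \<noteq> 1"
    and "definable2 R"
    and "\<forall>x y. x \<noteq> 0 \<longrightarrow> (R x y \<longleftrightarrow> y \<in> (\<lambda>i. smul (r i) x) ` {..<n})"
    and "bij \<phi>"
    and "\<forall>a b. R a b \<longleftrightarrow> R (\<phi> a) (\<phi> b)"
  shows "\<forall>a \<sigma>. a \<noteq> 0 \<and> bij_betw \<sigma> (r ` {..<n}) (r ` {..<n})
           \<and> (\<forall>i<n. \<phi> (smul (r i) a) = smul (\<sigma> (r i)) (\<phi> a))
         \<longrightarrow> (\<forall>i<n. \<forall>j<n. \<bar>r i\<bar> = \<bar>r j\<bar> \<longrightarrow> \<bar>\<sigma> (r i)\<bar> = \<bar>\<sigma> (r j)\<bar>)"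
proof (intro allI impI)
  fix a \<sigma> i j
  assume H: "a \<noteq> 0 \<and> bij_betw \<sigma> (r ` {..<n}) (r ` {..<n})
           \<and> (\<forall>i<n. \<phi> (smul (r i) a) = smul (\<sigma> (r i)) (\<phi> a))"
    and ij: "i < n" "j < n" and "\<bar>r i\<bar> = \<bar>r j\<bar>"
  show "\<bar>\<sigma> (r i)\<bar> = \<bar>\<sigma> (r j)\<bar>"
  proof (cases "r j = r i")
    case False
    then have rj: "r j = - r i" using \<open>\<bar>r i\<bar> = \<bar>r j\<bar>\<close> by (auto simp: abs_eq_iff)
    interpret scaling_preserver "r ` {..<n}" R \<phi> "r i"
      using assms(3,5-7) ij rj by unfold_locales (auto simp: image_iff, metis lessThan_iff)
    have a: "a \<noteq> 0" and y: "smul (r i) a \<noteq> 0" using H ij assms(3) by auto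
    have "smul (\<sigma> (r j)) (\<phi> a) = \<phi> (- smul (r i) a)"
      using H ij by (metis rj smul_minus_left)
    also have "\<dots> = smul (neg_factor (smul (r i) a) * \<sigma> (r i)) (\<phi> a)"
      using \<phi>_uminus[OF y] H ij by (simp add: smul_smul)
    finally have "\<sigma> (r j) = neg_factor (smul (r i) a) * \<sigma> (r i)"
      using smul_right_cancel[OF \<phi>_nonzero[OF a]] by blast
    then show ?thesis using abs_neg_factor[OF y] by (simp add: abs_mult)
  qed simp
qed

end
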